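(* Let $E$ be a finite set and $\underline I=(I_\omega)_{\omega\in E}$ a family of non-empty finite sets, and let $\mathrm{CC}(\underline I)$ be the set of causally complete spaces of input histories $\Theta$ with $E^\Theta=E$ and $I^\Theta_\omega=I_\omega$ for all $\omega\in E$. Then for all $\Theta,\Theta'\in\mathrm{CC}(\underline I)$ the meet $\Theta\wedge\Theta'$ lies in $\mathrm{CC}(\underline I)$; and if $|E|\ge 2$, there exist $\Theta,\Theta'\in\mathrm{CC}(\underline I)$ whose join $\Theta\vee\Theta'$ does not lie in $\mathrm{CC}(\underline I)$.
   Context: Partial functions on $\underline I$: $f$ with $\mathrm{dom}(f)\subseteq E$, $f(\omega)\in I_\omega$, ordered by restriction. Compatible = agreeing on common domain; compatible $\mathcal F$ has join $\bigvee\mathcal F$ (union). $\Theta$ is $\vee$-prime if for compatible $\mathcal F\subseteq\Theta$ with $\bigvee\mathcal F\in\Theta$ we have $\bigvee\mathcal F\in\mathcal F$. A space of input histories is a finite $\vee$-prime set of partial functions; $E^\Theta=\bigcup_{h\in\Theta}\mathrm{dom}(h)$, $I^\Theta_\omega=\{h(\omega):h\in\Theta,\omega\in\mathrm{dom}(h)\}$, $\mathrm{Ext}(\Theta)=\{\bigvee\mathcal F:\emptyset\ne\mathcal F\subseteq\Theta\text{ compatible}\}$. Free-choice: maximal elements of $\mathrm{Ext}(\Theta)$ are exactly the total functions in $\prod_{\omega\in E^\Theta}I^\Theta_\omega$. $\mathrm{tips}_\Theta(h)=\mathrm{dom}(h)\setminus\bigcup\{\mathrm{dom}(k):k\in\mathrm{Ext}(\Theta),k<h\}$.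 Causally complete: free-choice and $|\mathrm{tips}_\Theta(h)|=1$ for all $h\in\Theta$. For a set $W$, $\mathrm{Prime}(W)=\{w\in W:\text{for all compatible }\mathcal F\subseteq W,\ w=\bigvee\mathcal F\Rightarrow w\in\mathcal F\}$. Meet and join of spaces: $\Theta\wedge\Theta'=\mathrm{Prime}(\mathrm{Ext}(\Theta)\cup\mathrm{Ext}(\Theta'))$, $\Theta\vee\Theta'=\mathrm{Prime}(\mathrm{Ext}(\Theta)\cap\mathrm{Ext}(\Theta'))$. *)

theory Defs
  imports Main
begin

definition pf_on :: "'e set \<Rightarrow> ('e \<Rightarrow> 'i set) \<Rightarrow> ('e \<rightharpoonup> 'i) \<Rightarrow> bool" where
  "pf_on E I f \<longleftrightarrow> dom f \<subseteq> E \<and> (\<forall>\<omega>\<in>dom f. the (f \<omega>) \<in> I \<omega>)"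

definition pf_less :: "('e \<rightharpoonup> 'i) \<Rightarrow> ('e \<rightharpoonup> 'i) \<Rightarrow> bool" where
  "pf_less f g \<longleftrightarrow> f \<subseteq>\<^sub>m g \<and> f \<noteq> g"

definition compatible :: "('e \<rightharpoonup> 'i) set \<Rightarrow> bool" where
  "compatible F \<longleftrightarrow> (\<forall>f\<in>F. \<forall>g\<in>F. \<forall>\<omega>\<in>dom f \<inter> dom g. f \<omega> = g \<omega>)"

text \<open>Join (union) of a family of partial functions (meaningful for compatible families).\<close>
definition pf_join :: "('e \<rightharpoonup> 'i) set \<Rightarrow> ('e \<rightharpoonup> 'i)" where
  "pf_join F = (\<lambda>\<omega>. if \<exists>f\<in>F. \<omega> \<in> dom f then (SOME f. f \<in> F \<and> \<omega> \<in> dom f) \<omega> else None)"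

definition vee_prime :: "('e \<rightharpoonup> 'i) set \<Rightarrow> bool" where
  "vee_prime \<Theta> \<longleftrightarrow> (\<forall>F. F \<subseteq> \<Theta> \<and> compatible F \<and> pf_join F \<in> \<Theta> \<longrightarrow> pf_join F \<in> F)"

definition space_of_histories :: "'e set \<Rightarrow> ('e \<Rightarrow> 'i set) \<Rightarrow> ('e \<rightharpoonup> 'i) set \<Rightarrow> bool" where
  "space_of_histories E I \<Theta> \<longleftrightarrow> finite \<Theta> \<and> (\<forall>h\<in>\<Theta>. pf_on E I h) \<and> vee_prime \<Theta>"

definition events :: "('e \<rightharpoonup> 'i) set \<Rightarrow> 'e set" where
  "events \<Theta> = (\<Union>h\<in>\<Theta>. dom h)"

definition inputs :: "('e \<rightharpoonup> 'i) set \<Rightarrow> 'e \<Rightarrow> 'i set" where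
  "inputs \<Theta> \<omega> = {the (h \<omega>) | h. h \<in> \<Theta> \<and> \<omega> \<in> dom h}"

definition Ext :: "('e \<rightharpoonup> 'i) set \<Rightarrow> ('e \<rightharpoonup> 'i) set" where
  "Ext \<Theta> = {pf_join F | F. F \<noteq> {} \<and> F \<subseteq> \<Theta> \<and> compatible F}"

definition free_choice :: "('e \<rightharpoonup> 'i) set \<Rightarrow> bool" where
  "free_choice \<Theta> \<longleftrightarrow>
     {h \<in> Ext \<Theta>. \<not> (\<exists>k\<in>Ext \<Theta>. pf_less h k)} =
     {h. dom h = events \<Theta> \<and> (\<forall>\<omega>\<in>events \<Theta>. the (h \<omega>) \<in> inputs \<Theta> \<omega>)}"

definition tips :: "('e \<rightharpoonup> 'i) set \<Rightarrow> ('e \<rightharpoonup> 'i) \<Rightarrow> 'e set" where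
  "tips \<Theta> h = dom h - (\<Union>{dom k | k. k \<in> Ext \<Theta> \<and> pf_less k h})"

definition causally_complete :: "('e \<rightharpoonup> 'i) set \<Rightarrow> bool" where
  "causally_complete \<Theta> \<longleftrightarrow> free_choice \<Theta> \<and> (\<forall>h\<in>\<Theta>. card (tips \<Theta> h) = 1)"

definition Prime :: "('e \<rightharpoonup> 'i) set \<Rightarrow> ('e \<rightharpoonup> 'i) set" where
  "Prime W = {w \<in> W. \<forall>F. F \<subseteq> W \<and> compatible F \<and> w = pf_join F \<longrightarrow> w \<in> F}"

definition hist_meet :: "('e \<rightharpoonup> 'i) set \<Rightarrow> ('e \<rightharpoonup> 'i) set \<Rightarrow> ('e \<rightharpoonup> 'i) set" where
  "hist_meet \<Theta> \<Theta>' = Prime (Ext \<Theta> \<union> Ext \<Theta>')"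

definition hist_join :: "('e \<rightharpoonup> 'i) set \<Rightarrow> ('e \<rightharpoonup> 'i) set \<Rightarrow> ('e \<rightharpoonup> 'i) set" where
  "hist_join \<Theta> \<Theta>' = Prime (Ext \<Theta> \<inter> Ext \<Theta>')"

definition CC :: "'e set \<Rightarrow> ('e \<Rightarrow> 'i set) \<Rightarrow> ('e \<rightharpoonup> 'i) set set" where
  "CC E I = {\<Theta>. space_of_histories E I \<Theta> \<and> causally_complete \<Theta> \<and>
                 events \<Theta> = E \<and> (\<forall>\<omega>\<in>E. inputs \<Theta> \<omega> = I \<omega>)}"

end

theory Submission
  imports Defs
begin

text \<open>
  A history of the meet of \<open>\<Theta>\<close> and \<open>\<Theta>'\<close> is prime in \<open>Ext \<Theta> \<union> Ext \<Theta>'\<close>, hence already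
  lies in \<open>\<Theta>\<close> or in \<open>\<Theta>'\<close>. Conversely every element of \<open>Ext \<Theta> \<union> Ext \<Theta>'\<close> is a join of
  primes, so it extends the meet; thus the meet has the same events, inputs and total
  histories. Having more extensions can only remove tips, while primality keeps at least one,
  so every history of the meet still has exactly one tip.

  For the join, let \<open>\<Theta>\<^sub>c\<close> be the space in which the event \<open>c\<close> comes first and every other
  event depends on \<open>c\<close> alone. For distinct \<open>a\<close>, \<open>b\<close> the common extensions of \<open>\<Theta>\<^sub>a\<close> and \<open>\<Theta>\<^sub>b\<close>
  are the partial functions defined at \<open>a\<close> and \<open>b\<close>; a minimal one, with domain \<open>{a, b}\<close>, is
  prime in the join and has the two tips \<open>a\<close> and \<open>b\<close>.
\<close>

lemma pf_join_apply:
  assumes "compatible F" "f \<in> F" "\<omega> \<in> dom f"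
  shows "pf_join F \<omega> = f \<omega>"
proof -
  let ?g = "SOME f. f \<in> F \<and> \<omega> \<in> dom f"
  have g: "?g \<in> F \<and> \<omega> \<in> dom ?g"
    using assms(2,3) by (rule someI[of _ f, OF conjI])
  then have "pf_join F \<omega> = ?g \<omega>" by (auto simp: pf_join_def)
  also have "\<dots> = f \<omega>" using assms g unfolding compatible_def by blast
  finally show ?thesis .
qed

lemma map_le_pf_join: "compatible F \<Longrightarrow> f \<in> F \<Longrightarrow> f \<subseteq>\<^sub>m pf_join F"
  by (auto simp: map_le_def pf_join_apply)

lemma dom_pf_join: "dom (pf_join F) = (\<Union>f\<in>F. dom f)"
proof
  show "dom (pf_join F) \<subseteq> (\<Union>f\<in>F. dom f)"
    by (auto simp: pf_join_def split: if_splits)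
  show "(\<Union>f\<in>F. dom f) \<subseteq> dom (pf_join F)"
  proof
    fix \<omega> assume "\<omega> \<in> (\<Union>f\<in>F. dom f)"
    then have ex: "\<exists>f\<in>F. \<omega> \<in> dom f" by blast
    then have "\<omega> \<in> dom (SOME f. f \<in> F \<and> \<omega> \<in> dom f)"
      using someI_ex[of "\<lambda>f. f \<in> F \<and> \<omega> \<in> dom f"] by blast
    with ex show "\<omega> \<in> dom (pf_join F)" by (auto simp: pf_join_def dom_def)
  qed
qed

lemma pf_join_empty: "pf_join {} = Map.empty"
  by (simp add: pf_join_def)

lemma compatible_if_map_le: "(\<And>f. f \<in> F \<Longrightarrow> f \<subseteq>\<^sub>m g) \<Longrightarrow> compatible F"
  unfolding compatible_def map_le_def by (metis IntD1 IntD2)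

lemma map_le_dom_eq: "k \<subseteq>\<^sub>m h \<Longrightarrow> dom h \<subseteq> dom k \<Longrightarrow> k = h"
  by (metis map_le_antisym map_le_def subsetD)

lemma map_le_pf_less_trans: "g \<subseteq>\<^sub>m k \<Longrightarrow> pf_less k h \<Longrightarrow> pf_less g h"
  unfolding pf_less_def by (metis map_le_antisym map_le_trans)

lemma pf_join_eqI:
  assumes "compatible F" "\<And>f. f \<in> F \<Longrightarrow> f \<subseteq>\<^sub>m g" "dom g \<subseteq> (\<Union>f\<in>F. dom f)"
  shows "pf_join F = g"
proof (rule map_le_dom_eq)
  show "pf_join F \<subseteq>\<^sub>m g"
    using assms(1,2) by (auto simp: map_le_def dom_pf_join pf_join_apply)
  show "dom g \<subseteq> dom (pf_join F)" using assms(3) by (simp add: dom_pf_join)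
qed

lemma mem_Ext_iff:
  "h \<in> Ext P \<longleftrightarrow> (\<exists>g\<in>P. g \<subseteq>\<^sub>m h) \<and> (\<forall>\<omega>\<in>dom h. \<exists>g\<in>P. g \<subseteq>\<^sub>m h \<and> \<omega> \<in> dom g)"
proof
  assume "h \<in> Ext P"
  then obtain F where "F \<noteq> {}" "F \<subseteq> P" "compatible F" "h = pf_join F"
    unfolding Ext_def by blast
  then show "(\<exists>g\<in>P. g \<subseteq>\<^sub>m h) \<and> (\<forall>\<omega>\<in>dom h. \<exists>g\<in>P. g \<subseteq>\<^sub>m h \<and> \<omega> \<in> dom g)"
    using map_le_pf_join dom_pf_join by (metis UN_E all_not_in_conv subsetD)
next
  assume cover: "(\<exists>g\<in>P. g \<subseteq>\<^sub>m h) \<and> (\<forall>\<omega>\<in>dom h. \<exists>g\<in>P. g \<subseteq>\<^sub>m h \<and> \<omega> \<in> dom g)"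
  define F where "F = {g \<in> P. g \<subseteq>\<^sub>m h}"
  have "compatible F" by (rule compatible_if_map_le[of F h]) (simp add: F_def)
  moreover have "pf_join F = h"
  proof (rule pf_join_eqI[OF \<open>compatible F\<close>])
    show "f \<subseteq>\<^sub>m h" if "f \<in> F" for f using that by (simp add: F_def)
    show "dom h \<subseteq> (\<Union>f\<in>F. dom f)" using cover unfolding F_def by blast
  qed
  moreover have "F \<noteq> {}" "F \<subseteq> P" using cover by (auto simp: F_def)
  ultimately show "h \<in> Ext P" unfolding Ext_def by blast
qed

lemma Ext_below: "h \<in> Ext P \<Longrightarrow> \<exists>g\<in>P. g \<subseteq>\<^sub>m h"
  unfolding mem_Ext_iff by (elim conjE)

lemma Ext_cover:
  assumes "h \<in> Ext P" "\<omega> \<in> dom h"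
  obtains g where "g \<in> P" "g \<subseteq>\<^sub>m h" "\<omega> \<in> dom g"
  using assms unfolding mem_Ext_iff by blast

lemma subset_Ext: "P \<subseteq> Ext P"
  unfolding subset_iff mem_Ext_iff using map_le_refl by blast

lemma Ext_Ext: "Ext (Ext P) = Ext P"
proof
  show "Ext (Ext P) \<subseteq> Ext P"
  proof
    fix h assume h: "h \<in> Ext (Ext P)"
    obtain k where "k \<in> Ext P" "k \<subseteq>\<^sub>m h" using Ext_below[OF h] by blast
    moreover obtain g where "g \<in> P" "g \<subseteq>\<^sub>m k" using Ext_below[OF \<open>k \<in> Ext P\<close>] by blast
    ultimately have "\<exists>g\<in>P. g \<subseteq>\<^sub>m h" using map_le_trans by blast
    moreover have "\<exists>g\<in>P. g \<subseteq>\<^sub>m h \<and> \<omega> \<in> dom g" if \<omega>: "\<omega> \<in> dom h" for \<omega>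
    proof -
      obtain k where "k \<in> Ext P" "k \<subseteq>\<^sub>m h" "\<omega> \<in> dom k" using Ext_cover[OF h \<omega>] .
      moreover obtain g where "g \<in> P" "g \<subseteq>\<^sub>m k" "\<omega> \<in> dom g"
        using Ext_cover[OF \<open>k \<in> Ext P\<close> \<open>\<omega> \<in> dom k\<close>] .
      ultimately show ?thesis using map_le_trans by blast
    qed
    ultimately show "h \<in> Ext P" unfolding mem_Ext_iff[of h P] by blast
  qed
  show "Ext P \<subseteq> Ext (Ext P)" by (rule subset_Ext)
qed

lemma Ext_pf_on:
  assumes "\<forall>h\<in>\<Theta>. pf_on E I h" "h \<in> Ext \<Theta>"
  shows "pf_on E I h"
  unfolding pf_on_def
proof (intro conjI subsetI ballI)
  fix \<omega> assume "\<omega> \<in> dom h"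
  with assms(2) obtain g where g: "g \<in> \<Theta>" "g \<subseteq>\<^sub>m h" "\<omega> \<in> dom g" by (rule Ext_cover)
  then have "h \<omega> = g \<omega>" by (simp add: map_le_def)
  with g(1,3) assms(1) show "\<omega> \<in> E" "the (h \<omega>) \<in> I \<omega>" unfolding pf_on_def by auto
qed

lemma empty_notin_Ext: "Map.empty \<notin> \<Theta> \<Longrightarrow> Map.empty \<notin> Ext \<Theta>"
  using Ext_below[of "Map.empty" \<Theta>] map_le_antisym[OF _ map_le_empty] by blast

lemma pf_on_events_inputs: "h \<in> \<Theta> \<Longrightarrow> pf_on (events \<Theta>) (inputs \<Theta>) h"
  unfolding pf_on_def events_def inputs_def by blast

lemma events_mono: "A \<subseteq> B \<Longrightarrow> events A \<subseteq> events B"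
  unfolding events_def by blast

lemma inputs_mono: "A \<subseteq> B \<Longrightarrow> inputs A \<omega> \<subseteq> inputs B \<omega>"
  unfolding inputs_def by blast

lemma events_Un: "events (A \<union> B) = events A \<union> events B"
  by (simp add: events_def)

lemma inputs_Un: "inputs (A \<union> B) \<omega> = inputs A \<omega> \<union> inputs B \<omega>"
  unfolding inputs_def by (rule set_eqI) blast

lemma finite_pf_on:
  assumes "finite E" "\<forall>\<omega>\<in>E. finite (I \<omega>)"
  shows "finite {h. pf_on E I h}"
proof (rule finite_subset)
  show "{h. pf_on E I h} \<subseteq> (\<Union>A\<in>Pow E. {m. dom m = A \<and> ran m \<subseteq> \<Union>(I ` E)})"
    unfolding pf_on_def ran_def by force
  show "finite (\<Union>A\<in>Pow E. {m. dom m = A \<and> ran m \<subseteq> \<Union>(I ` E)})"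
    using assms by (auto intro!: finite_set_of_finite_maps intro: finite_subset)
qed

lemma events_eqI:
  assumes "\<forall>h\<in>\<Theta>. pf_on E I h" "\<forall>\<omega>\<in>E. \<exists>h\<in>\<Theta>. \<omega> \<in> dom h"
  shows "events \<Theta> = E"
proof
  show "events \<Theta> \<subseteq> E" using assms(1) by (auto simp: events_def pf_on_def)
  show "E \<subseteq> events \<Theta>" using assms(2) by (auto simp: events_def)
qed

lemma inputs_eqI:
  assumes "\<forall>h\<in>\<Theta>. pf_on E I h" "\<forall>x\<in>I \<omega>. \<exists>h\<in>\<Theta>. h \<omega> = Some x"
  shows "inputs \<Theta> \<omega> = I \<omega>"
proof
  show "inputs \<Theta> \<omega> \<subseteq> I \<omega>" using assms(1) by (auto simp: inputs_def pf_on_def)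
  show "I \<omega> \<subseteq> inputs \<Theta> \<omega>"
  proof
    fix x assume "x \<in> I \<omega>"
    with assms(2) obtain h where "h \<in> \<Theta>" "h \<omega> = Some x" by blast
    then show "x \<in> inputs \<Theta> \<omega>" unfolding inputs_def by force
  qed
qed

lemma Ext_pf_on_events_inputs: "h \<in> Ext \<Theta> \<Longrightarrow> pf_on (events \<Theta>) (inputs \<Theta>) h"
  by (rule Ext_pf_on[of \<Theta>]) (simp_all add: pf_on_events_inputs)

lemma events_Ext: "events (Ext \<Theta>) = events \<Theta>"
proof
  have "dom h \<subseteq> events \<Theta>" if "h \<in> Ext \<Theta>" for h
    using Ext_pf_on_events_inputs[OF that] by (simp add: pf_on_def)
  then show "events (Ext \<Theta>) \<subseteq> events \<Theta>" unfolding events_def[of "Ext \<Theta>"] by blast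
  show "events \<Theta> \<subseteq> events (Ext \<Theta>)" by (rule events_mono[OF subset_Ext])
qed

lemma inputs_Ext: "inputs (Ext \<Theta>) \<omega> = inputs \<Theta> \<omega>"
proof
  have "the (h \<omega>) \<in> inputs \<Theta> \<omega>" if "h \<in> Ext \<Theta>" "\<omega> \<in> dom h" for h
    using Ext_pf_on_events_inputs[OF that(1)] that(2) by (simp add: pf_on_def)
  then show "inputs (Ext \<Theta>) \<omega> \<subseteq> inputs \<Theta> \<omega>" unfolding inputs_def[of "Ext \<Theta>"] by blast
  show "inputs \<Theta> \<omega> \<subseteq> inputs (Ext \<Theta>) \<omega>" by (rule inputs_mono[OF subset_Ext])
qed

text \<open>The maximal extensions are automatically among the total histories, since any
  extension can be completed to a total one.\<close>

lemma free_choice_iff: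
  "free_choice \<Theta> \<longleftrightarrow>
     (\<forall>t. dom t = events \<Theta> \<and> (\<forall>\<omega>\<in>events \<Theta>. the (t \<omega>) \<in> inputs \<Theta> \<omega>) \<longrightarrow> t \<in> Ext \<Theta>)"
proof -
  let ?T = "{t. dom t = events \<Theta> \<and> (\<forall>\<omega>\<in>events \<Theta>. the (t \<omega>) \<in> inputs \<Theta> \<omega>)}"
  have total_maximal: "\<not> pf_less t k" if "t \<in> ?T" "k \<in> Ext \<Theta>" for t k
    using Ext_pf_on_events_inputs[OF that(2)] that(1) map_le_dom_eq[of t k]
    unfolding pf_on_def pf_less_def by auto
  have maximal_total: "h \<in> ?T"
    if T: "?T \<subseteq> Ext \<Theta>" and h: "h \<in> Ext \<Theta>" "\<forall>k\<in>Ext \<Theta>. \<not> pf_less h k" for h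
  proof -
    define t where "t \<omega> = (if \<omega> \<in> dom h then h \<omega>
      else if \<omega> \<in> events \<Theta> then Some (SOME x. x \<in> inputs \<Theta> \<omega>) else None)" for \<omega>
    have "inputs \<Theta> \<omega> \<noteq> {}" if "\<omega> \<in> events \<Theta>" for \<omega>
      using that unfolding events_def inputs_def by blast
    moreover have "\<omega> \<in> events \<Theta>" if "\<omega> \<in> dom h" for \<omega>
      using Ext_pf_on_events_inputs[OF h(1)] that unfolding pf_on_def by blast
    ultimately have "t \<in> ?T"
      using Ext_pf_on_events_inputs[OF h(1)] unfolding t_def pf_on_def
      by (auto simp: some_in_eq split: if_splits)
    moreover have "h \<subseteq>\<^sub>m t" by (auto simp: t_def map_le_def)
    ultimately have "h = t" using T h unfolding pf_less_def by blast
    with \<open>t \<in> ?T\<close> show ?thesis by simp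
  qed
  show ?thesis
    unfolding free_choice_def using total_maximal maximal_total by blast
qed

section \<open>Prime histories and tips\<close>

lemma Prime_subset: "Prime W \<subseteq> W"
  by (auto simp: Prime_def)

lemma vee_prime_Prime: "vee_prime (Prime W)"
  unfolding vee_prime_def Prime_def by blast

lemma Prime_Ext_subset: "P \<subseteq> W \<Longrightarrow> Prime W \<inter> Ext P \<subseteq> P"
  unfolding Prime_def Ext_def by blast

lemma empty_notin_if_vee_prime:
  assumes "vee_prime \<Theta>"
  shows "Map.empty \<notin> \<Theta>"
proof
  assume "Map.empty \<in> \<Theta>"
  then have "{} \<subseteq> \<Theta> \<and> compatible {} \<and> pf_join {} \<in> \<Theta>"
    by (simp add: compatible_def pf_join_empty)
  with assms have "pf_join {} \<in> {}" unfolding vee_prime_def by blast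
  then show False by simp
qed

text \<open>A non-prime element of \<open>W\<close> is the join of strictly smaller elements of \<open>W\<close>, whose
  domains are smaller.\<close>

lemma subset_Ext_Prime:
  assumes "\<forall>w\<in>W. finite (dom w) \<and> w \<noteq> Map.empty"
  shows "W \<subseteq> Ext (Prime W)"
proof
  fix w assume "w \<in> W"
  then show "w \<in> Ext (Prime W)"
  proof (induction "card (dom w)" arbitrary: w rule: less_induct)
    case less
    show ?case
    proof (cases "w \<in> Prime W")
      case True
      then show ?thesis using subset_Ext by blast
    next
      case False
      then obtain F where F: "F \<subseteq> W" "compatible F" "w = pf_join F" "w \<notin> F"
        using less.prems unfolding Prime_def by blast
      have "f \<in> Ext (Prime W)" if "f \<in> F" for f
      proof (rule less.hyps)
        have "f \<subseteq>\<^sub>m w" "f \<noteq> w" using F that map_le_pf_join by auto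
        then have "dom f \<subset> dom w" using map_le_dom_eq map_le_implies_dom_le by blast
        moreover have "finite (dom w)" using assms less.prems by blast
        ultimately show "card (dom f) < card (dom w)" by (simp add: psubset_card_mono)
        show "f \<in> W" using F that by blast
      qed
      moreover have "F \<noteq> {}" using F assms less.prems pf_join_empty by auto
      ultimately have "w \<in> Ext (Ext (Prime W))"
        using F unfolding Ext_def by blast
      then show ?thesis by (simp only: Ext_Ext)
    qed
  qed
qed

lemma minimal_in_Prime:
  assumes "h \<in> W" "h \<noteq> Map.empty" "\<forall>g\<in>W. g \<subseteq>\<^sub>m h \<longrightarrow> g = h"
  shows "h \<in> Prime W"
  unfolding Prime_def
proof (intro CollectI conjI allI impI)
  fix F assume F: "F \<subseteq> W \<and> compatible F \<and> h = pf_join F"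
  then obtain f where "f \<in> F" using assms(2) pf_join_empty by fastforce
  moreover from this have "f = h" using F assms(3) map_le_pf_join by blast
  ultimately show "h \<in> F" by simp
qed (rule assms(1))

lemma tips_eq_dom_if_minimal:
  assumes "\<forall>g\<in>\<Theta>. g \<subseteq>\<^sub>m h \<longrightarrow> g = h"
  shows "tips \<Theta> h = dom h"
proof -
  have "\<not> pf_less k h" if "k \<in> Ext \<Theta>" for k
    using that assms Ext_below map_le_pf_less_trans unfolding pf_less_def by blast
  then show ?thesis unfolding tips_def by blast
qed

lemma tips_antimono: "Ext \<Theta> \<subseteq> Ext \<Psi> \<Longrightarrow> tips \<Psi> h \<subseteq> tips \<Theta> h"
  unfolding tips_def by blast

lemma vee_prime_iff_tips_nonempty: "vee_prime \<Theta> \<longleftrightarrow> (\<forall>h\<in>\<Theta>. tips \<Theta> h \<noteq> {})"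
proof
  assume prime: "vee_prime \<Theta>"
  show "\<forall>h\<in>\<Theta>. tips \<Theta> h \<noteq> {}"
  proof (intro ballI notI)
    fix h assume h: "h \<in> \<Theta>" and no_tips: "tips \<Theta> h = {}"
    define F where "F = {g \<in> \<Theta>. pf_less g h}"
    have below: "f \<subseteq>\<^sub>m h" if "f \<in> F" for f using that by (simp add: F_def pf_less_def)
    then have compatible: "compatible F" by (rule compatible_if_map_le)
    have "dom h \<subseteq> (\<Union>f\<in>F. dom f)"
    proof
      fix \<omega> assume "\<omega> \<in> dom h"
      then obtain k where k: "k \<in> Ext \<Theta>" "pf_less k h" "\<omega> \<in> dom k"
        using no_tips unfolding tips_def by blast
      then obtain g where "g \<in> \<Theta>" "g \<subseteq>\<^sub>m k" "\<omega> \<in> dom g" by (blast elim: Ext_cover)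
      with k(2) show "\<omega> \<in> (\<Union>f\<in>F. dom f)" using map_le_pf_less_trans by (auto simp: F_def)
    qed
    with compatible below have "pf_join F = h" by (rule pf_join_eqI)
    moreover have "F \<subseteq> \<Theta>" by (auto simp: F_def)
    ultimately have "h \<in> F" using prime h compatible unfolding vee_prime_def by blast
    then show False by (simp add: F_def pf_less_def)
  qed
next
  assume tips: "\<forall>h\<in>\<Theta>. tips \<Theta> h \<noteq> {}"
  show "vee_prime \<Theta>"
    unfolding vee_prime_def
  proof (intro allI impI)
    fix F assume F: "F \<subseteq> \<Theta> \<and> compatible F \<and> pf_join F \<in> \<Theta>"
    then obtain \<omega> where \<omega>: "\<omega> \<in> tips \<Theta> (pf_join F)" using tips by blast
    then obtain f where f: "f \<in> F" "\<omega> \<in> dom f" unfolding tips_def dom_pf_join by blast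
    show "pf_join F \<in> F"
    proof (rule ccontr)
      assume "pf_join F \<notin> F"
      with F f have "f \<in> Ext \<Theta>" "pf_less f (pf_join F)"
        using subset_Ext[of \<Theta>] map_le_pf_join[of F f] unfolding pf_less_def by auto
      with f(2) \<omega> show False unfolding tips_def by blast
    qed
  qed
qed

section \<open>The meet\<close>

lemma hist_meet_subset: "hist_meet \<Theta> \<Theta>' \<subseteq> \<Theta> \<union> \<Theta>'"
proof -
  let ?W = "Ext \<Theta> \<union> Ext \<Theta>'"
  have "Prime ?W \<inter> Ext \<Theta> \<subseteq> \<Theta>" "Prime ?W \<inter> Ext \<Theta>' \<subseteq> \<Theta>'"
    by (rule Prime_Ext_subset, use subset_Ext in blast)+
  moreover have "Prime ?W \<subseteq> ?W" by (rule Prime_subset)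
  ultimately show ?thesis unfolding hist_meet_def by blast
qed

lemma Ext_subset_Ext_hist_meet:
  assumes "finite (events \<Theta>)" "finite (events \<Theta>')" "vee_prime \<Theta>" "vee_prime \<Theta>'"
  shows "Ext \<Theta> \<union> Ext \<Theta>' \<subseteq> Ext (hist_meet \<Theta> \<Theta>')"
  unfolding hist_meet_def
proof (rule subset_Ext_Prime, intro ballI conjI)
  fix w assume "w \<in> Ext \<Theta> \<union> Ext \<Theta>'"
  then have "dom w \<subseteq> events (Ext \<Theta>) \<union> events (Ext \<Theta>')"
    unfolding events_def[of "Ext \<Theta>"] events_def[of "Ext \<Theta>'"] by blast
  then have "dom w \<subseteq> events \<Theta> \<union> events \<Theta>'" by (simp only: events_Ext)
  then show "finite (dom w)" using assms(1,2) finite_subset by blast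
  show "w \<noteq> Map.empty"
    using \<open>w \<in> Ext \<Theta> \<union> Ext \<Theta>'\<close> empty_notin_Ext[OF empty_notin_if_vee_prime] assms(3,4) by blast
qed

lemma card_eq_1_subset: "A \<subseteq> B \<Longrightarrow> card B = 1 \<Longrightarrow> A \<noteq> {} \<Longrightarrow> card A = 1"
  by (metis card_1_singletonE subset_singletonD)

lemma card_tips_hist_meet:
  assumes "Ext \<Theta> \<union> Ext \<Theta>' \<subseteq> Ext (hist_meet \<Theta> \<Theta>')"
    and "\<forall>h\<in>\<Theta>. card (tips \<Theta> h) = 1" "\<forall>h\<in>\<Theta>'. card (tips \<Theta>' h) = 1"
    and h: "h \<in> hist_meet \<Theta> \<Theta>'"
  shows "card (tips (hist_meet \<Theta> \<Theta>') h) = 1"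
proof -
  let ?\<Psi> = "hist_meet \<Theta> \<Theta>'"
  have "tips ?\<Psi> h \<subseteq> tips \<Theta> h \<and> h \<in> \<Theta> \<or> tips ?\<Psi> h \<subseteq> tips \<Theta>' h \<and> h \<in> \<Theta>'"
    using h hist_meet_subset tips_antimono[of \<Theta> ?\<Psi>] tips_antimono[of \<Theta>' ?\<Psi>] assms(1) by blast
  then obtain T where "tips ?\<Psi> h \<subseteq> T" "card T = 1" using assms(2,3) by blast
  moreover have "tips ?\<Psi> h \<noteq> {}"
    using vee_prime_Prime h unfolding hist_meet_def vee_prime_iff_tips_nonempty by blast
  ultimately show ?thesis by (rule card_eq_1_subset)
qed

lemma hist_meet_CC:
  assumes "finite E" "\<Theta> \<in> CC E I" "\<Theta>' \<in> CC E I"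
  shows "hist_meet \<Theta> \<Theta>' \<in> CC E I"
proof -
  define \<Psi> where "\<Psi> = hist_meet \<Theta> \<Theta>'"
  from assms(2,3) have \<Theta>: "finite \<Theta>" "\<forall>h\<in>\<Theta>. pf_on E I h" "vee_prime \<Theta>"
      "\<forall>h\<in>\<Theta>. card (tips \<Theta> h) = 1" "free_choice \<Theta>" "events \<Theta> = E" "\<forall>\<omega>\<in>E. inputs \<Theta> \<omega> = I \<omega>"
    and \<Theta>': "finite \<Theta>'" "\<forall>h\<in>\<Theta>'. pf_on E I h" "vee_prime \<Theta>'"
      "\<forall>h\<in>\<Theta>'. card (tips \<Theta>' h) = 1" "events \<Theta>' = E" "\<forall>\<omega>\<in>E. inputs \<Theta>' \<omega> = I \<omega>"
    by (auto simp: CC_def space_of_histories_def causally_complete_def)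
  have sub: "\<Psi> \<subseteq> \<Theta> \<union> \<Theta>'" unfolding \<Psi>_def by (rule hist_meet_subset)
  have Ext_sub: "Ext \<Theta> \<union> Ext \<Theta>' \<subseteq> Ext \<Psi>"
    using Ext_subset_Ext_hist_meet[of \<Theta> \<Theta>'] \<Theta> \<Theta>' assms(1) unfolding \<Psi>_def by simp
  have events: "events \<Psi> = E"
  proof
    show "events \<Psi> \<subseteq> E" using events_mono[OF sub] \<Theta>(6) \<Theta>'(5) by (simp add: events_Un)
    show "E \<subseteq> events \<Psi>"
      using events_mono[of "Ext \<Theta>" "Ext \<Psi>"] Ext_sub \<Theta>(6) by (simp add: events_Ext)
  qed
  have inputs: "inputs \<Psi> \<omega> = I \<omega>" if "\<omega> \<in> E" for \<omega>
  proof
    show "inputs \<Psi> \<omega> \<subseteq> I \<omega>"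
      using inputs_mono[OF sub, of \<omega>] \<Theta>(7) \<Theta>'(6) that by (simp add: inputs_Un)
    show "I \<omega> \<subseteq> inputs \<Psi> \<omega>"
      using inputs_mono[of "Ext \<Theta>" "Ext \<Psi>" \<omega>] Ext_sub \<Theta>(7) that by (simp add: inputs_Ext)
  qed
  have "free_choice \<Psi>"
    using \<Theta>(5,6,7) events inputs Ext_sub by (auto simp: free_choice_iff)
  moreover have "\<forall>h\<in>\<Psi>. card (tips \<Psi> h) = 1"
    using card_tips_hist_meet Ext_sub \<Theta>(4) \<Theta>'(4) unfolding \<Psi>_def by blast
  moreover have "vee_prime \<Psi>" unfolding \<Psi>_def hist_meet_def by (rule vee_prime_Prime)
  moreover have "finite \<Psi>" using sub \<Theta>(1) \<Theta>'(1) by (simp add: finite_subset)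
  moreover have "\<forall>h\<in>\<Psi>. pf_on E I h" using sub \<Theta>(2) \<Theta>'(2) by blast
  ultimately show ?thesis
    using events inputs
    unfolding \<Psi>_def CC_def space_of_histories_def causally_complete_def by blast
qed

section \<open>Star-shaped spaces and their join\<close>

text \<open>The causal order of \<open>star E I c\<close> is the star with centre \<open>c\<close>: the event \<open>c\<close> happens
  first, and each other event depends on the input at \<open>c\<close> alone.\<close>

definition star :: "'e set \<Rightarrow> ('e \<Rightarrow> 'i set) \<Rightarrow> 'e \<Rightarrow> ('e \<rightharpoonup> 'i) set" where
  "star E I c = {[c \<mapsto> x] | x. x \<in> I c} \<union>
     {[c \<mapsto> x, w \<mapsto> y] | x w y. x \<in> I c \<and> w \<in> E \<and> w \<noteq> c \<and> y \<in> I w}"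

lemma starE:
  assumes "h \<in> star E I c"
  obtains (root) x where "h = [c \<mapsto> x]" "x \<in> I c"
  | (leaf) x w y where "h = [c \<mapsto> x, w \<mapsto> y]" "x \<in> I c" "w \<in> E" "w \<noteq> c" "y \<in> I w"
  using assms unfolding star_def by blast

lemma star_pf_on: "c \<in> E \<Longrightarrow> \<forall>h\<in>star E I c. pf_on E I h"
  by (auto simp: star_def pf_on_def split: if_splits)

lemma star_root_in_dom: "h \<in> star E I c \<Longrightarrow> c \<in> dom h"
  by (cases rule: starE) auto

lemma Ext_star:
  assumes "c \<in> E"
  shows "Ext (star E I c) = {h. pf_on E I h \<and> c \<in> dom h}"
proof (intro equalityI subsetI CollectI conjI)
  fix h assume h: "h \<in> Ext (star E I c)"
  then show "pf_on E I h" by (rule Ext_pf_on[OF star_pf_on[OF assms]])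
  obtain g where g: "g \<in> star E I c" "g \<subseteq>\<^sub>m h" using Ext_below[OF h] by blast
  show "c \<in> dom h" using star_root_in_dom[OF g(1)] map_le_implies_dom_le[OF g(2)] by blast
next
  fix h assume "h \<in> {h. pf_on E I h \<and> c \<in> dom h}"
  then have pf: "pf_on E I h" and "c \<in> dom h" by auto
  then obtain x where x: "h c = Some x" "x \<in> I c" unfolding pf_on_def by force
  have root: "[c \<mapsto> x] \<in> star E I c" "[c \<mapsto> x] \<subseteq>\<^sub>m h"
    using x by (auto simp: star_def map_le_def)
  have "\<exists>g\<in>star E I c. g \<subseteq>\<^sub>m h \<and> \<omega> \<in> dom g" if "\<omega> \<in> dom h" for \<omega>
  proof (cases "\<omega> = c")
    case True
    with root show ?thesis by (intro bexI[where x = "[c \<mapsto> x]"]) auto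
  next
    case False
    from that obtain y where "h \<omega> = Some y" by blast
    moreover from this that pf have "\<omega> \<in> E" "y \<in> I \<omega>" unfolding pf_on_def by force+
    ultimately have "[c \<mapsto> x, \<omega> \<mapsto> y] \<in> star E I c" "[c \<mapsto> x, \<omega> \<mapsto> y] \<subseteq>\<^sub>m h"
      using x False by (auto simp: star_def map_le_def)
    then show ?thesis by (intro bexI[where x = "[c \<mapsto> x, \<omega> \<mapsto> y]"]) auto
  qed
  with root show "h \<in> Ext (star E I c)" unfolding mem_Ext_iff by blast
qed

lemma tips_star:
  assumes "c \<in> E" "h \<in> star E I c"
  shows "card (tips (star E I c) h) = 1"
  using assms(2)
proof (cases rule: starE)
  case (root x)
  have "g = h" if "g \<in> star E I c" "g \<subseteq>\<^sub>m h" for g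
  proof (rule map_le_dom_eq[OF that(2)])
    show "dom h \<subseteq> dom g" using star_root_in_dom[OF that(1)] root(1) by simp
  qed
  then have "tips (star E I c) h = dom h" by (intro tips_eq_dom_if_minimal) blast
  with root(1) show ?thesis by simp
next
  case (leaf x w y)
  let ?Ext = "Ext (star E I c)"
  have "[c \<mapsto> x] \<in> star E I c" using leaf(2) by (auto simp: star_def)
  then have "[c \<mapsto> x] \<in> ?Ext" using subset_Ext by blast
  moreover have "pf_less [c \<mapsto> x] h"
    using leaf(1,4) by (auto simp: pf_less_def map_le_def fun_eq_iff)
  ultimately have "tips (star E I c) h \<subseteq> dom h - dom [c \<mapsto> x]" unfolding tips_def by blast
  then have "tips (star E I c) h \<subseteq> {w}" using leaf(1) by auto
  moreover have "w \<notin> dom k" if "k \<in> ?Ext" "pf_less k h" for k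
  proof
    assume "w \<in> dom k"
    moreover have "c \<in> dom k" using that(1) by (simp add: Ext_star[OF assms(1)])
    ultimately have "dom h \<subseteq> dom k" using leaf(1) by simp
    with that(2) show False using map_le_dom_eq[of k h] unfolding pf_less_def by blast
  qed
  moreover have "w \<in> dom h" using leaf(1) by simp
  ultimately have "tips (star E I c) h = {w}" unfolding tips_def by blast
  then show ?thesis by simp
qed

lemma star_realises_inputs:
  assumes "c \<in> E" "I c \<noteq> {}" "\<omega> \<in> E" "x \<in> I \<omega>"
  shows "\<exists>h\<in>star E I c. h \<omega> = Some x"
proof (cases "\<omega> = c")
  case True
  with assms(4) have "[c \<mapsto> x] \<in> star E I c" by (auto simp: star_def)
  with True show ?thesis by (intro bexI[where x = "[c \<mapsto> x]"]) auto
next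
  case False
  obtain x\<^sub>c where "x\<^sub>c \<in> I c" using assms(2) by blast
  with assms(3,4) False have "[c \<mapsto> x\<^sub>c, \<omega> \<mapsto> x] \<in> star E I c" by (auto simp: star_def)
  then show ?thesis by (intro bexI[where x = "[c \<mapsto> x\<^sub>c, \<omega> \<mapsto> x]"]) auto
qed

lemma star_CC:
  assumes "finite E" "\<forall>\<omega>\<in>E. finite (I \<omega>) \<and> I \<omega> \<noteq> {}" "c \<in> E"
  shows "star E I c \<in> CC E I"
proof -
  let ?S = "star E I c"
  have pf: "\<forall>h\<in>?S. pf_on E I h" by (rule star_pf_on[OF assms(3)])
  have "I c \<noteq> {}" using assms(2,3) by blast
  have realises: "\<exists>h\<in>?S. h \<omega> = Some x" if "\<omega> \<in> E" "x \<in> I \<omega>" for \<omega> x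
    by (rule star_realises_inputs[OF assms(3) \<open>I c \<noteq> {}\<close> that])
  have events: "events ?S = E"
  proof (rule events_eqI[OF pf], intro ballI)
    fix \<omega> assume "\<omega> \<in> E"
    with assms(2) obtain x where "x \<in> I \<omega>" by blast
    with realises[OF \<open>\<omega> \<in> E\<close>] show "\<exists>h\<in>?S. \<omega> \<in> dom h" by (meson domI)
  qed
  have inputs: "\<forall>\<omega>\<in>E. inputs ?S \<omega> = I \<omega>"
    by (intro ballI inputs_eqI[OF pf]) (simp add: realises)
  have "?S \<subseteq> {h. pf_on E I h}" using pf by blast
  then have "finite ?S" using finite_pf_on[of E I] assms(1,2) finite_subset by blast
  moreover have tips: "\<forall>h\<in>?S. card (tips ?S h) = 1" using tips_star[OF assms(3)] by blast
  moreover from tips have "vee_prime ?S"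
    unfolding vee_prime_iff_tips_nonempty by (metis card.empty zero_neq_one)
  moreover have "free_choice ?S"
  proof (unfold free_choice_iff events, intro allI impI)
    fix t assume t: "dom t = E \<and> (\<forall>\<omega>\<in>E. the (t \<omega>) \<in> inputs ?S \<omega>)"
    then have "pf_on E I t" using inputs by (simp add: pf_on_def)
    with t assms(3) show "t \<in> Ext ?S" by (simp add: Ext_star)
  qed
  ultimately show ?thesis
    using pf events inputs unfolding CC_def space_of_histories_def causally_complete_def by blast
qed

lemma hist_join_star_not_CC:
  assumes "\<forall>\<omega>\<in>E. I \<omega> \<noteq> {}" "a \<in> E" "b \<in> E" "a \<noteq> b"
  shows "hist_join (star E I a) (star E I b) \<notin> CC E I"
proof
  define W where "W = {h. pf_on E I h \<and> a \<in> dom h \<and> b \<in> dom h}"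
  have join: "hist_join (star E I a) (star E I b) = Prime W"
    unfolding hist_join_def Ext_star[OF assms(2)] Ext_star[OF assms(3)] W_def by (rule arg_cong) blast
  obtain x y where "x \<in> I a" "y \<in> I b" using assms by blast
  define h where "h = [a \<mapsto> x, b \<mapsto> y]"
  have "h \<in> W" using \<open>x \<in> I a\<close> \<open>y \<in> I b\<close> assms(2-4) by (auto simp: W_def h_def pf_on_def)
  have dom_h: "dom h = {a, b}" by (auto simp: h_def)
  have minimal: "\<forall>g\<in>W. g \<subseteq>\<^sub>m h \<longrightarrow> g = h"
  proof (intro ballI impI)
    fix g assume "g \<in> W" "g \<subseteq>\<^sub>m h"
    then show "g = h" using map_le_dom_eq[of g h] dom_h unfolding W_def by simp
  qed
  assume "hist_join (star E I a) (star E I b) \<in> CC E I"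
  then have "\<forall>h\<in>Prime W. card (tips (Prime W) h) = 1"
    unfolding join CC_def causally_complete_def by blast
  moreover have "h \<in> Prime W" using \<open>h \<in> W\<close> dom_h minimal by (intro minimal_in_Prime) auto
  moreover have "tips (Prime W) h = {a, b}"
    using minimal Prime_subset dom_h tips_eq_dom_if_minimal by (metis subsetD)
  ultimately show False using assms(4) by auto
qed

theorem proposition20:
  fixes E :: "'e set" and I :: "'e \<Rightarrow> 'i set"
  assumes "finite E"
    and "\<forall>\<omega>\<in>E. finite (I \<omega>) \<and> I \<omega> \<noteq> {}"
  shows "(\<forall>\<Theta>\<in>CC E I. \<forall>\<Theta>'\<in>CC E I. hist_meet \<Theta> \<Theta>' \<in> CC E I)
       \<and> (card E \<ge> 2 \<longrightarrow> (\<exists>\<Theta>\<in>CC E I. \<exists>\<Theta>'\<in>CC E I. hist_join \<Theta> \<Theta>' \<notin> CC E I))"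
proof (intro conjI ballI impI)
  fix \<Theta> \<Theta>' assume "\<Theta> \<in> CC E I" "\<Theta>' \<in> CC E I"
  with assms(1) show "hist_meet \<Theta> \<Theta>' \<in> CC E I" by (rule hist_meet_CC)
next
  assume "card E \<ge> 2"
  then obtain a b where ab: "a \<in> E" "b \<in> E" "a \<noteq> b"
    using card_le_Suc0_iff_eq[OF assms(1)] by force
  have "hist_join (star E I a) (star E I b) \<notin> CC E I"
    using assms(2) ab by (intro hist_join_star_not_CC) auto
  with star_CC[OF assms ab(1)] star_CC[OF assms ab(2)]
  show "\<exists>\<Theta>\<in>CC E I. \<exists>\<Theta>'\<in>CC E I. hist_join \<Theta> \<Theta>' \<notin> CC E I" by blast
qed

end
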